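(* Let $\ell\ge1$, let $G$ be an $\ell$-connected chordal graph, and let $T$ be a clique of $G$ with $T\ne V(G)$. If $(G,T)$ can be obtained from $(G-v,T\setminus\{v\})$ using an introduce operation, then $|T|\ge \ell+1$ and $G-v$ is $\ell$-connected. If $(G,T)$ can be obtained from $(G_1,T)$ and $(G_2,T)$ using a join operation, then $|T|\ge\ell$ and both $G_1$ and $G_2$ are $\ell$-connected.
   Context: A chordal graph has no induced cycle of length $>3$. For $\ell\ge1$, a connected graph $G$ is $\ell$-connected if $|V(G)|\ge\ell+1$ and every vertex cut (set whose removal disconnects $G$) has at least $\ell$ vertices. A terminal graph $(G,T)$ is a graph with $T\subseteq V(G)$. $(G,T)$ is obtained from $(G-v,T\setminus\{v\})$ by introducing $v$ if $T\ne V(G)$, $v\in T$ and $N(v)\subseteq T$. $(G,T)$ is the join of $(G_1,T)$ and $(G_2,T)$ if $G_1,G_2$ are induced subgraphs of $G$, $V(G_1)\cap V(G_2)=T$, $V(G_1)\cup V(G_2)=V(G)$, $V(G_1)\ne T\ne V(G_2)$, and every edge of $G$ lies in $G_1$ or in $G_2$. *)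

theory Defs
  imports Main
begin

definition graph :: "'a set \<Rightarrow> ('a \<Rightarrow> 'a \<Rightarrow> bool) \<Rightarrow> bool" where
  "graph V E \<longleftrightarrow> finite V \<and> (\<forall>u v. E u v \<longrightarrow> u \<in> V \<and> v \<in> V \<and> u \<noteq> v \<and> E v u)"

definition induced :: "('a \<Rightarrow> 'a \<Rightarrow> bool) \<Rightarrow> 'a set \<Rightarrow> 'a \<Rightarrow> 'a \<Rightarrow> bool" where
  "induced E S = (\<lambda>u v. E u v \<and> u \<in> S \<and> v \<in> S)"

definition connected_graph :: "'a set \<Rightarrow> ('a \<Rightarrow> 'a \<Rightarrow> bool) \<Rightarrow> bool" where
  "connected_graph V E \<longleftrightarrow> V \<noteq> {} \<and> (\<forall>u\<in>V. \<forall>w\<in>V. (induced E V)\<^sup>*\<^sup>* u w)"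

definition vertex_cut :: "'a set \<Rightarrow> ('a \<Rightarrow> 'a \<Rightarrow> bool) \<Rightarrow> 'a set \<Rightarrow> bool" where
  "vertex_cut V E S \<longleftrightarrow> S \<subseteq> V \<and> \<not> connected_graph (V - S) (induced E (V - S))"

definition l_connected :: "nat \<Rightarrow> 'a set \<Rightarrow> ('a \<Rightarrow> 'a \<Rightarrow> bool) \<Rightarrow> bool" where
  "l_connected l V E \<longleftrightarrow> connected_graph V E \<and> card V \<ge> l + 1 \<and>
     (\<forall>S. vertex_cut V E S \<longrightarrow> card S \<ge> l)"

definition induced_cycle :: "'a set \<Rightarrow> ('a \<Rightarrow> 'a \<Rightarrow> bool) \<Rightarrow> 'a list \<Rightarrow> bool" where
  "induced_cycle V E xs \<longleftrightarrow> length xs \<ge> 3 \<and> distinct xs \<and> set xs \<subseteq> V \<and>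
     (\<forall>i < length xs. \<forall>j < length xs.
        E (xs ! i) (xs ! j) \<longleftrightarrow> (j = Suc i mod length xs \<or> i = Suc j mod length xs))"

definition chordal :: "'a set \<Rightarrow> ('a \<Rightarrow> 'a \<Rightarrow> bool) \<Rightarrow> bool" where
  "chordal V E \<longleftrightarrow> \<not> (\<exists>xs. induced_cycle V E xs \<and> length xs > 3)"

definition clique :: "'a set \<Rightarrow> ('a \<Rightarrow> 'a \<Rightarrow> bool) \<Rightarrow> 'a set \<Rightarrow> bool" where
  "clique V E T \<longleftrightarrow> T \<subseteq> V \<and> (\<forall>u\<in>T. \<forall>w\<in>T. u \<noteq> w \<longrightarrow> E u w)"

text \<open>(G,T) is obtained from (G - v, T - {v}) by introducing v.\<close>
definition introduce :: "'a set \<Rightarrow> ('a \<Rightarrow> 'a \<Rightarrow> bool) \<Rightarrow> 'a set \<Rightarrow> 'a \<Rightarrow> bool" where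
  "introduce V E T v \<longleftrightarrow> T \<noteq> V \<and> v \<in> T \<and> {u. E v u} \<subseteq> T"

text \<open>(G,T) is the join of (G[V1],T) and (G[V2],T).\<close>
definition join :: "'a set \<Rightarrow> ('a \<Rightarrow> 'a \<Rightarrow> bool) \<Rightarrow> 'a set \<Rightarrow> 'a set \<Rightarrow> 'a set \<Rightarrow> bool" where
  "join V E T V1 V2 \<longleftrightarrow> V1 \<subseteq> V \<and> V2 \<subseteq> V \<and> V1 \<inter> V2 = T \<and> V1 \<union> V2 = V \<and>
     V1 \<noteq> T \<and> V2 \<noteq> T \<and>
     (\<forall>u v. E u v \<longrightarrow> (u \<in> V1 \<and> v \<in> V1) \<or> (u \<in> V2 \<and> v \<in> V2))"

end

theory Submission
  imports Defs
begin

text \<open>Every vertex cut is witnessed by a set of vertices with no edges leaving it. Removing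
  the neighbourhood of an introduced vertex \<open>v\<close> isolates \<open>v\<close>, and \<open>T\<close> itself separates the two
  sides of a join; this gives the bounds on \<open>|T|\<close>. Conversely, a small cut of \<open>G - v\<close> or of
  \<open>G\<^sub>1\<close> would already be a cut of \<open>G\<close>: the neighbourhood of \<open>v\<close> is a clique, so \<open>v\<close> can be
  re-attached to one side of the cut, and a side of a cut of \<open>G\<^sub>1\<close> that misses the clique \<open>T\<close>
  has no neighbours in \<open>G\<^sub>2\<close>.\<close>

definition adj_closed :: "('a \<Rightarrow> 'a \<Rightarrow> bool) \<Rightarrow> 'a set \<Rightarrow> 'a set \<Rightarrow> bool" where
  "adj_closed E W A \<longleftrightarrow> (\<forall>x\<in>A. \<forall>y\<in>W. E x y \<longrightarrow> y \<in> A)"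

lemma induced_induced: "B \<subseteq> A \<Longrightarrow> induced (induced E A) B = induced E B"
  by (auto simp: induced_def fun_eq_iff)

lemma vertex_cut_induced_iff:
  "vertex_cut W (induced E W) S \<longleftrightarrow> S \<subseteq> W \<and> \<not> connected_graph (W - S) (induced E (W - S))"
  by (auto simp: vertex_cut_def induced_induced)

lemma not_connected_graphI:
  assumes "A \<subseteq> W" "A \<noteq> {}" "W - A \<noteq> {}" "adj_closed E W A"
  shows "\<not> connected_graph W (induced E W)"
proof
  assume conn: "connected_graph W (induced E W)"
  obtain a b where a: "a \<in> A" and b: "b \<in> W" "b \<notin> A" using assms(2,3) by blast
  have "(induced E W)\<^sup>*\<^sup>* a b"
    using conn a b assms(1) by (auto simp: connected_graph_def induced_induced)
  then have "b \<in> A"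
    by (induction rule: rtranclp_induct)
      (use a assms(4) in \<open>auto simp: adj_closed_def induced_def\<close>)
  with b show False by simp
qed

lemma not_connected_graphE:
  assumes "W \<noteq> {}" "\<not> connected_graph W (induced E W)"
  obtains A where "A \<subseteq> W" "A \<noteq> {}" "W - A \<noteq> {}" "adj_closed E W A"
proof -
  obtain u w where uw: "u \<in> W" "w \<in> W" "\<not> (induced E W)\<^sup>*\<^sup>* u w"
    using assms by (auto simp: connected_graph_def induced_induced)
  define A where "A = {x \<in> W. (induced E W)\<^sup>*\<^sup>* u x}"
  have "adj_closed E W A"
    unfolding adj_closed_def A_def
    by (auto intro: rtranclp.rtrancl_into_rtrancl simp: induced_def)
  moreover have "A \<subseteq> W" "u \<in> A" "w \<in> W - A" using uw by (auto simp: A_def)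
  ultimately show ?thesis using that by blast
qed

lemma adj_closed_Diff:
  assumes "\<And>x y. E x y \<Longrightarrow> E y x" "adj_closed E W A"
  shows "adj_closed E W (W - A)"
  using assms by (auto simp: adj_closed_def)

lemma adj_closed_clique:
  assumes "adj_closed E W A" "clique V E K" "t \<in> A" "t \<in> K" "A \<subseteq> W"
  shows "K \<inter> W \<subseteq> A"
proof
  fix x assume "x \<in> K \<inter> W"
  with assms show "x \<in> A"
    by (cases "x = t") (auto simp: adj_closed_def clique_def)
qed

text \<open>Deleting a simplicial vertex \<open>v\<close> cannot disconnect a graph: a side of a cut of \<open>G - v\<close>
  containing a neighbour of \<open>v\<close> contains all of them, so \<open>v\<close> can be added to it.\<close>

lemma not_connected_insert_simplicial:
  assumes sym: "\<And>x y. E x y \<Longrightarrow> E y x"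
    and simplicial: "\<And>x y. E v x \<Longrightarrow> E v y \<Longrightarrow> x \<noteq> y \<Longrightarrow> E x y"
    and "v \<notin> W" "W \<noteq> {}" "\<not> connected_graph W (induced E W)"
  shows "\<not> connected_graph (insert v W) (induced E (insert v W))"
proof -
  obtain A where A: "A \<subseteq> W" "A \<noteq> {}" "W - A \<noteq> {}" "adj_closed E W A"
    using not_connected_graphE[OF assms(4,5)] by blast
  show ?thesis
  proof (cases "\<exists>a\<in>A. E v a")
    case True
    then obtain a where "a \<in> A" "E v a" by blast
    then have "adj_closed E (insert v W) (insert v A)"
      using A(1,4) simplicial by (auto simp: adj_closed_def; metis)
    then show ?thesis
      by (rule not_connected_graphI[rotated 3]) (use A \<open>v \<notin> W\<close> in auto)
  next
    case False
    then have "adj_closed E (insert v W) A"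
      using A(4) sym by (auto simp: adj_closed_def)
    then show ?thesis
      by (rule not_connected_graphI[rotated 3]) (use A in auto)
  qed
qed

lemma l_connected_inducedI:
  assumes "l \<ge> 1" "card W \<ge> l + 1"
    and cuts: "\<And>S. S \<subseteq> W \<Longrightarrow> W - S \<noteq> {} \<Longrightarrow>
      \<not> connected_graph (W - S) (induced E (W - S)) \<Longrightarrow> card S \<ge> l"
  shows "l_connected l W (induced E W)"
proof -
  have cut_bound: "card S \<ge> l" if "vertex_cut W (induced E W) S" for S
  proof (cases "W - S = {}")
    case True
    with that have "S = W" by (auto simp: vertex_cut_def)
    with assms(2) show ?thesis by simp
  next
    case False
    with that cuts show ?thesis by (auto simp: vertex_cut_induced_iff)
  qed
  have "vertex_cut W (induced E W) {} \<Longrightarrow> False"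
    using cut_bound[of "{}"] assms(1) by simp
  then have "connected_graph W (induced E W)"
    by (auto simp: vertex_cut_induced_iff)
  then show ?thesis
    using assms(2) cut_bound by (auto simp: l_connected_def induced_induced)
qed

lemma card_ge_if_introduce:
  assumes g: "graph V E" and lc: "l_connected l V E"
    and cl: "clique V E T" and iv: "introduce V E T v"
  shows "card T \<ge> l + 1"
proof -
  define N where "N = {u. E v u}"
  have TV: "T \<subseteq> V" "T \<noteq> V" using cl iv unfolding clique_def introduce_def by blast+
  have vT: "v \<in> T" and NT: "N \<subseteq> T" using iv unfolding introduce_def N_def by blast+
  have vN: "v \<notin> N" using g unfolding graph_def N_def by blast
  have "adj_closed E (V - N) {v}" unfolding adj_closed_def N_def by blast
  then have "\<not> connected_graph (V - N) (induced E (V - N))"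
    by (rule not_connected_graphI[rotated 3]) (use TV vT vN NT in blast)+
  then have "vertex_cut V E N" using NT TV unfolding vertex_cut_def by blast
  then have "card N \<ge> l" using lc unfolding l_connected_def by blast
  have "finite T" using g TV(1) finite_subset unfolding graph_def by blast
  then have "card (insert v N) \<le> card T" using vT NT by (intro card_mono) blast+
  moreover have "card (insert v N) = card N + 1"
    using vN NT \<open>finite T\<close> by (simp add: finite_subset)
  ultimately show ?thesis using \<open>card N \<ge> l\<close> by linarith
qed

lemma l_connected_delete_if_introduce:
  assumes g: "graph V E" and "l \<ge> 1" and lc: "l_connected l V E"
    and cl: "clique V E T" and iv: "introduce V E T v" and cT: "card T \<ge> l + 1"
  shows "l_connected l (V - {v}) (induced E (V - {v}))"
proof (rule l_connected_inducedI)
  have fin: "finite V" and sym: "\<And>x y. E x y \<Longrightarrow> E y x"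
    using g unfolding graph_def by blast+
  have TV: "T \<subseteq> V" "T \<noteq> V" using cl iv unfolding clique_def introduce_def by blast+
  have vT: "v \<in> T" and NT: "\<And>u. E v u \<Longrightarrow> u \<in> T"
    using iv unfolding introduce_def by blast+
  have "card T < card V" using TV fin psubset_card_mono by blast
  moreover have "card (V - {v}) = card V - 1" using vT TV(1) by (simp add: subsetD)
  ultimately show "card (V - {v}) \<ge> l + 1" using cT by linarith
  have simplicial: "\<And>x y. E v x \<Longrightarrow> E v y \<Longrightarrow> x \<noteq> y \<Longrightarrow> E x y"
    using NT cl unfolding clique_def by blast
  fix S assume S: "S \<subseteq> V - {v}" and ne: "V - {v} - S \<noteq> {}"
    and nc: "\<not> connected_graph (V - {v} - S) (induced E (V - {v} - S))"
  have "\<not> connected_graph (insert v (V - {v} - S)) (induced E (insert v (V - {v} - S)))"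
    using not_connected_insert_simplicial[of E v, OF sym simplicial _ ne nc] by blast
  moreover have "insert v (V - {v} - S) = V - S" using S vT TV(1) by blast
  ultimately have "vertex_cut V E S" using S unfolding vertex_cut_def by auto
  then show "card S \<ge> l" using lc unfolding l_connected_def by blast
qed (fact \<open>l \<ge> 1\<close>)

lemma join_commute: "join V E T V1 V2 \<Longrightarrow> join V E T V2 V1"
  unfolding join_def by blast

lemma join_edge_left: "join V E T V1 V2 \<Longrightarrow> x \<in> V1 - T \<Longrightarrow> E x y \<Longrightarrow> y \<in> V1"
  unfolding join_def by blast

lemma join_sides:
  assumes "join V E T V1 V2"
  shows "T \<subset> V1" "V1 \<subseteq> V" "V1 - T \<noteq> {}" "V - V1 \<noteq> {}"
  using assms unfolding join_def by blast+

lemma card_ge_if_join: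
  assumes lc: "l_connected l V E" and j: "join V E T V1 V2"
  shows "card T \<ge> l"
proof -
  note J = join_sides[OF j]
  have "adj_closed E (V - T) (V1 - T)"
    using join_edge_left[OF j] by (auto simp: adj_closed_def)
  then have "\<not> connected_graph (V - T) (induced E (V - T))"
    by (rule not_connected_graphI[rotated 3]) (use J in auto)
  then have "vertex_cut V E T" using J by (auto simp: vertex_cut_def)
  then show ?thesis using lc by (auto simp: l_connected_def)
qed

lemma l_connected_join_part:
  assumes g: "graph V E" and "l \<ge> 1" and lc: "l_connected l V E"
    and cl: "clique V E T" and j: "join V E T V1 V2" and cT: "card T \<ge> l"
  shows "l_connected l V1 (induced E V1)"
proof (rule l_connected_inducedI)
  note J = join_sides[OF j]
  have sym: "\<And>x y. E x y \<Longrightarrow> E y x" using g by (auto simp: graph_def)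
  have fin1: "finite V1" using g J(2) finite_subset by (auto simp: graph_def)
  have "card T < card V1" using fin1 J(1) psubset_card_mono by blast
  then show "card V1 \<ge> l + 1" using cT by simp
  fix S assume S: "S \<subseteq> V1" and ne: "V1 - S \<noteq> {}"
    and nc: "\<not> connected_graph (V1 - S) (induced E (V1 - S))"
  show "card S \<ge> l"
  proof (cases "T \<subseteq> S")
    case True
    then have "card T \<le> card S" using fin1 S finite_subset card_mono by metis
    with cT show ?thesis by simp
  next
    case False
    then obtain t where t: "t \<in> T" "t \<notin> S" by blast
    have tV1: "t \<in> V1 - S" using t J(1) by blast
    obtain A where A: "A \<subseteq> V1 - S" "A \<noteq> {}" "V1 - S - A \<noteq> {}" "adj_closed E (V1 - S) A"
      using not_connected_graphE[OF ne nc] by blast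
    txt \<open>Take the side \<open>D\<close> of the cut missing \<open>t\<close>; as \<open>T\<close> is a clique, \<open>D\<close> misses all of \<open>T\<close>.\<close>
    obtain D where D: "D \<subseteq> V1 - S" "D \<noteq> {}" "t \<notin> D" "adj_closed E (V1 - S) D"
    proof (cases "t \<in> A")
      case True
      then show ?thesis
        using that[of "V1 - S - A"] A adj_closed_Diff[OF sym A(4)] by blast
    next
      case False
      then show ?thesis using that[of A] A by blast
    qed
    have "D \<inter> T = {}"
    proof (rule ccontr)
      assume "D \<inter> T \<noteq> {}"
      then obtain z where "z \<in> D" "z \<in> T" by blast
      then have "T \<inter> (V1 - S) \<subseteq> D" by (rule adj_closed_clique[OF D(4) cl _ _ D(1)])
      with t tV1 D(3) show False by blast
    qed
    then have "D \<subseteq> V1 - T" using D(1) by blast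
    then have "adj_closed E (V - S) D"
      using D(4) join_edge_left[OF j] unfolding adj_closed_def by blast
    then have "\<not> connected_graph (V - S) (induced E (V - S))"
      by (rule not_connected_graphI[rotated 3]) (use D tV1 J(2) in auto)
    then have "vertex_cut V E S" using S J(2) by (auto simp: vertex_cut_def)
    then show ?thesis using lc by (auto simp: l_connected_def)
  qed
qed (fact \<open>l \<ge> 1\<close>)

theorem proposition6:
  fixes V :: "'a set" and E :: "'a \<Rightarrow> 'a \<Rightarrow> bool" and T :: "'a set" and l :: nat
  assumes "graph V E"
    and "l \<ge> 1"
    and "l_connected l V E"
    and "chordal V E"
    and "clique V E T"
    and "T \<noteq> V"
  shows "(\<forall>v. introduce V E T v \<longrightarrow>
            card T \<ge> l + 1 \<and> l_connected l (V - {v}) (induced E (V - {v})))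
       \<and> (\<forall>V1 V2. join V E T V1 V2 \<longrightarrow>
            card T \<ge> l \<and> l_connected l V1 (induced E V1) \<and> l_connected l V2 (induced E V2))"
proof (intro conjI allI impI)
  fix v assume iv: "introduce V E T v"
  show cT: "card T \<ge> l + 1" using card_ge_if_introduce[OF assms(1,3,5) iv] .
  show "l_connected l (V - {v}) (induced E (V - {v}))"
    using l_connected_delete_if_introduce[OF assms(1,2,3,5) iv cT] .
next
  fix V1 V2 assume j: "join V E T V1 V2"
  show cT: "card T \<ge> l" using card_ge_if_join[OF assms(3) j] .
  show "l_connected l V1 (induced E V1)"
    using l_connected_join_part[OF assms(1,2,3,5) j cT] .
  show "l_connected l V2 (induced E V2)"
    using l_connected_join_part[OF assms(1,2,3,5) join_commute[OF j] cT] .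
qed

end
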